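(* Let $X\subseteq\{0,1\}^{\mathbb Z}$ be a sandwich measure-theoretically subordinate subshift and let $\rho$ be any base measure, with marginals $\nu_0$ (first coordinate) and $\nu_1$ (second coordinate). Then $\nu_0$ and $\nu_1$ are ergodic and do not depend on the choice of the base measure $\rho$. Moreover, \[ \nu_1(1)=\sup_{\mu\in\mathcal M(X)}\mu(1),\qquad \nu_0(0)=\sup_{\mu\in\mathcal M(X)}\mu(0), \] and $\nu_1$, resp. $\nu_0$, is the unique member of $\mathcal M(X)$ attaining the first, resp. second, supremum.
   Context: $\sigma$ is the left shift on $\{0,1\}^{\mathbb Z}$; $\mathcal M(Y)$ is the set of shift-invariant Borel probability measures on $Y$; $\mu(a)=\mu(\{x:x_0=a\})$. $N(w,x,y)=(1-y)w+yx$ coordinatewise, $\pi_{1,2}$ the projection to the first two coordinates. A subshift $X$ is a sandwich measure-theoretically subordinate subshift if there is $\rho\in\mathcal M((\{0,1\}^{\mathbb Z})^2,\sigma\times\sigma)$ with $\mathcal M(X)=\{N_*(\lambda):\lambda\in\mathcal M((\{0,1\}^{\mathbb Z})^3,\sigma^{\times3}),(\pi_{1,2})_*\lambda=\rho\}$; such $\rho$ is a pre-base measure, and a base measure if moreover $\rho(\{(w,x):w\le x\text{ coordinatewise}\})=1$. *)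

theory Defs
  imports "HOL-Analysis.Analysis" "HOL-Probability.Probability"
begin

text \<open>Points of the full shift are bi-infinite sequences over {0,1}, encoded as
  int => bool (True = 1, False = 0).  The topology is the product topology
  (library instance for function spaces, bool discrete); the measurable
  structure is the product sigma-algebra.\<close>

type_synonym seq = "int \<Rightarrow> bool"

definition S1 :: "seq measure" where
  "S1 = PiM UNIV (\<lambda>_. count_space UNIV)"

definition S2 :: "(seq \<times> seq) measure" where
  "S2 = S1 \<Otimes>\<^sub>M S1"

definition S3 :: "(seq \<times> seq \<times> seq) measure" where
  "S3 = S1 \<Otimes>\<^sub>M S2"

definition shift :: "seq \<Rightarrow> seq" where
  "shift x = (\<lambda>n. x (n + 1))"

definition shift2 :: "seq \<times> seq \<Rightarrow> seq \<times> seq" where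
  "shift2 p = (shift (fst p), shift (snd p))"

definition shift3 :: "seq \<times> seq \<times> seq \<Rightarrow> seq \<times> seq \<times> seq" where
  "shift3 t = (case t of (w, x, y) \<Rightarrow> (shift w, shift x, shift y))"

text \<open>N(w,x,y) = (1-y)w + yx coordinatewise.\<close>
definition Nmap :: "seq \<times> seq \<times> seq \<Rightarrow> seq" where
  "Nmap t = (case t of (w, x, y) \<Rightarrow> (\<lambda>n. if y n then x n else w n))"

definition pi12 :: "seq \<times> seq \<times> seq \<Rightarrow> seq \<times> seq" where
  "pi12 t = (case t of (w, x, y) \<Rightarrow> (w, x))"

definition inv_measures :: "'a measure \<Rightarrow> ('a \<Rightarrow> 'a) \<Rightarrow> 'a measure set" where
  "inv_measures S T = {\<mu>. sets \<mu> = sets S \<and> prob_space \<mu> \<and> distr \<mu> \<mu> T = \<mu>}"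

definition MX :: "seq set \<Rightarrow> seq measure set" where
  "MX X = {\<mu> \<in> inv_measures S1 shift. measure \<mu> X = 1}"

definition ergodic :: "seq measure \<Rightarrow> bool" where
  "ergodic \<mu> \<longleftrightarrow> \<mu> \<in> inv_measures S1 shift \<and>
     (\<forall>A \<in> sets S1. shift -` A \<inter> space S1 = A \<longrightarrow> measure \<mu> A = 0 \<or> measure \<mu> A = 1)"

definition subshift :: "seq set \<Rightarrow> bool" where
  "subshift X \<longleftrightarrow> closed X \<and> shift ` X = X"

text \<open>mu(a) = mu{x. x_0 = a}.\<close>
definition cyl0 :: "seq measure \<Rightarrow> bool \<Rightarrow> real" where
  "cyl0 \<mu> a = measure \<mu> {x \<in> space S1. x 0 = a}"

definition pre_base :: "seq set \<Rightarrow> (seq \<times> seq) measure \<Rightarrow> bool" where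
  "pre_base X \<rho> \<longleftrightarrow> \<rho> \<in> inv_measures S2 shift2 \<and>
     MX X = {distr L S1 Nmap | L. L \<in> inv_measures S3 shift3 \<and> distr L S2 pi12 = \<rho>}"

definition base :: "seq set \<Rightarrow> (seq \<times> seq) measure \<Rightarrow> bool" where
  "base X \<rho> \<longleftrightarrow> pre_base X \<rho> \<and> measure \<rho> {(w, x). \<forall>n. w n \<le> x n} = 1"

definition sandwich_subshift :: "seq set \<Rightarrow> bool" where
  "sandwich_subshift X \<longleftrightarrow> subshift X \<and> (\<exists>\<rho>. pre_base X \<rho>)"

definition marg0 :: "(seq \<times> seq) measure \<Rightarrow> seq measure" where
  "marg0 \<rho> = distr \<rho> S1 fst"

definition marg1 :: "(seq \<times> seq) measure \<Rightarrow> seq measure" where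
  "marg1 \<rho> = distr \<rho> S1 snd"

end

theory Submission
  imports Defs
begin

text \<open>Write \<open>\<nu>\<^sub>0, \<nu>\<^sub>1\<close> for the marginals of a base measure \<open>\<rho>\<close>. Every \<open>\<mu> \<in> \<M>(X)\<close> is
  \<open>N\<^sub>*\<lambda>\<close> for an invariant joining \<open>\<lambda>\<close> of \<open>\<rho>\<close> with a third sequence \<open>y\<close>. Since \<open>w \<le> x\<close> almost
  surely, \<open>N(w,x,y)\<close> is squeezed between \<open>w\<close> and \<open>x\<close>, so \<open>\<mu>(1) \<le> \<nu>\<^sub>1(1)\<close>; equality forces
  \<open>N(w,x,y)\<^sub>0 = x\<^sub>0\<close> almost surely, hence by shift invariance \<open>N(w,x,y) = x\<close> at every site, i.e.
  \<open>\<mu> = \<nu>\<^sub>1\<close>. Dually for \<open>\<nu>\<^sub>0\<close> and the symbol 0. So \<open>\<nu>\<^sub>1, \<nu>\<^sub>0\<close> are the unique maximisers of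
  \<open>\<mu>(1)\<close>, \<open>\<mu>(0)\<close> on \<open>\<M>(X)\<close>, which does not refer to \<open>\<rho>\<close>. A unique maximiser \<open>\<nu>\<close> is ergodic:
  for an invariant \<open>A\<close> with \<open>0 < \<nu>(A) < 1\<close>, \<open>\<nu>\<close> is a proper convex combination of its
  normalised restrictions to \<open>A\<close> and \<open>-A\<close>, both in \<open>\<M>(X)\<close>, so both attain the maximum and
  hence equal \<open>\<nu>\<close>, which is absurd.\<close>

lemma space_S1[simp]: "space S1 = UNIV"
  by (simp add: S1_def space_PiM PiE_def extensional_def)

lemma space_S2[simp]: "space S2 = UNIV"
  by (simp add: S2_def space_pair_measure)

lemma measurable_S1_component[measurable]: "(\<lambda>x. x n) \<in> S1 \<rightarrow>\<^sub>M count_space UNIV"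
  unfolding S1_def by (rule measurable_component_singleton) simp

lemma measurable_into_S1:
  "(\<And>n. (\<lambda>t. f t n) \<in> M \<rightarrow>\<^sub>M count_space UNIV) \<Longrightarrow> f \<in> M \<rightarrow>\<^sub>M S1"
  unfolding S1_def
  by (rule measurable_PiM_single') (auto simp: space_PiM PiE_def extensional_def)

lemma measurable_S2_fst_snd[measurable]: "fst \<in> S2 \<rightarrow>\<^sub>M S1" "snd \<in> S2 \<rightarrow>\<^sub>M S1"
  by (simp_all add: S2_def)

lemma measurable_S3_fst_snd[measurable]: "fst \<in> S3 \<rightarrow>\<^sub>M S1" "snd \<in> S3 \<rightarrow>\<^sub>M S2"
  by (simp_all add: S3_def)

lemma measurable_S2_Pair[measurable]:
  "f \<in> M \<rightarrow>\<^sub>M S1 \<Longrightarrow> g \<in> M \<rightarrow>\<^sub>M S1 \<Longrightarrow> (\<lambda>t. (f t, g t)) \<in> M \<rightarrow>\<^sub>M S2"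
  unfolding S2_def by (rule measurable_Pair)

lemma measurable_S3_Pair[measurable]:
  "f \<in> M \<rightarrow>\<^sub>M S1 \<Longrightarrow> g \<in> M \<rightarrow>\<^sub>M S1 \<Longrightarrow> h \<in> M \<rightarrow>\<^sub>M S1 \<Longrightarrow> (\<lambda>t. (f t, g t, h t)) \<in> M \<rightarrow>\<^sub>M S3"
  unfolding S3_def by (intro measurable_Pair measurable_S2_Pair)

lemma shift_measurable[measurable]: "shift \<in> S1 \<rightarrow>\<^sub>M S1"
  by (rule measurable_into_S1) (simp add: shift_def)

lemma shift2_measurable[measurable]: "shift2 \<in> S2 \<rightarrow>\<^sub>M S2"
  unfolding shift2_def by measurable

lemma shift3_measurable[measurable]: "shift3 \<in> S3 \<rightarrow>\<^sub>M S3"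
proof -
  have shift3_eq: "shift3 = (\<lambda>t. (shift (fst t), shift (fst (snd t)), shift (snd (snd t))))"
    by (auto simp: shift3_def split: prod.splits)
  show ?thesis unfolding shift3_eq by measurable
qed

lemma pi12_eq: "pi12 = (\<lambda>t. (fst t, fst (snd t)))"
  by (auto simp: pi12_def split: prod.splits)

lemma pi12_measurable[measurable]: "pi12 \<in> S3 \<rightarrow>\<^sub>M S2"
  unfolding pi12_eq by measurable

lemma Nmap_apply: "Nmap t n = (if snd (snd t) n then fst (snd t) n else fst t n)"
  by (simp add: Nmap_def split: prod.splits)

lemma Nmap_measurable[measurable]: "Nmap \<in> S3 \<rightarrow>\<^sub>M S1"
  by (rule measurable_into_S1) (simp add: Nmap_apply)

lemma Nmap_shift3: "Nmap (shift3 t) = shift (Nmap t)"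
  by (auto simp: Nmap_def shift3_def shift_def split: prod.splits)

lemma AE_all_int_if_AE_0:
  assumes T: "T \<in> M \<rightarrow>\<^sub>M M" and T_preserving: "distr M M T = M"
    and P: "\<And>n. Measurable.pred M (P n)"
    and P_T: "\<And>n t. t \<in> space M \<Longrightarrow> P n (T t) \<longleftrightarrow> P (n + 1) t"
    and P_0: "AE t in M. P 0 t"
  shows "AE t in M. \<forall>n::int. P n t"
proof -
  have step: "(AE t in M. P n t) \<longleftrightarrow> (AE t in M. P (n + 1) t)" for n
  proof -
    have "(AE t in M. P n t) \<longleftrightarrow> (AE t in distr M M T. P n t)"
      by (subst T_preserving) (rule refl)
    also have "\<dots> \<longleftrightarrow> (AE t in M. P n (T t))"
      using P[of n] by (intro AE_distr_iff[OF T]) (simp add: pred_def)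
    also have "\<dots> \<longleftrightarrow> (AE t in M. P (n + 1) t)"
      by (intro AE_cong) (simp add: P_T)
    finally show ?thesis .
  qed
  have "AE t in M. P n t" for n
  proof (induction n rule: int_induct[where k=0])
    case base
    show ?case by (rule P_0)
  next
    case (step1 i)
    then show ?case using step[of i] by simp
  next
    case (step2 i)
    then show ?case using step[of "i - 1"] by simp
  qed
  then show ?thesis by (simp add: AE_all_countable)
qed

lemma (in prob_space) AE_iff_if_AE_imp_and_prob_eq:
  assumes [measurable]: "Measurable.pred M P" "Measurable.pred M Q"
    and imp: "AE x in M. P x \<longrightarrow> Q x"
    and eq: "\<P>(x in M. P x) = \<P>(x in M. Q x)"
  shows "AE x in M. P x \<longleftrightarrow> Q x"
proof -
  have "\<P>(x in M. P x \<and> Q x) = \<P>(x in M. P x)"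
    using imp by (intro prob_eq_AE) auto
  moreover have "\<P>(x in M. Q x) = \<P>(x in M. P x \<and> Q x) + \<P>(x in M. Q x \<and> \<not> P x)"
    by (subst finite_measure_Union[symmetric]) (auto intro!: arg_cong[where f=prob])
  ultimately have "\<P>(x in M. Q x \<and> \<not> P x) = 0"
    using eq by simp
  then have "AE x in M. \<not> (Q x \<and> \<not> P x)"
    by (subst (asm) prob_Collect_eq_0) auto
  with imp show ?thesis
    by eventually_elim blast
qed

context prob_space
begin

lemma distr_eq_if_AE_le_and_prob_eq:
  assumes T: "T \<in> M \<rightarrow>\<^sub>M M" and T_preserving: "distr M M T = M"
    and f[measurable]: "f \<in> M \<rightarrow>\<^sub>M S1" and g[measurable]: "g \<in> M \<rightarrow>\<^sub>M S1"
    and f_T: "\<And>t. t \<in> space M \<Longrightarrow> f (T t) = shift (f t)"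
    and g_T: "\<And>t. t \<in> space M \<Longrightarrow> g (T t) = shift (g t)"
    and le: "AE t in M. \<forall>n. f t n \<le> g t n"
    and eq: "\<P>(t in M. f t 0) = \<P>(t in M. g t 0)"
  shows "distr M S1 f = distr M S1 g"
proof -
  have "AE t in M. f t 0 \<longleftrightarrow> g t 0"
    using le eq by (intro AE_iff_if_AE_imp_and_prob_eq) (auto simp: le_bool_def)
  then have "AE t in M. \<forall>n. f t n = g t n"
    using AE_all_int_if_AE_0[where P = "\<lambda>n t. f t n = g t n", OF T T_preserving]
    by (simp add: f_T g_T shift_def)
  then have "AE t in M. f t = g t"
    by (simp add: fun_eq_iff)
  then show ?thesis
    by (intro distr_cong_AE) auto
qed

end

lemma cylinder_in_sets_S1[measurable]: "{x. x n = b} \<in> sets S1"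
  using measurable_sets[OF measurable_S1_component, of "{b}"] by (simp add: vimage_def)

lemma cyl0_distr:
  assumes "f \<in> M \<rightarrow>\<^sub>M S1"
  shows "cyl0 (distr M S1 f) b = measure M {t \<in> space M. f t 0 = b}"
  using assms unfolding cyl0_def
  by (subst measure_distr) (auto intro!: arg_cong[where f="measure M"])

lemma cyl0_False:
  assumes "prob_space \<mu>" "sets \<mu> = sets S1"
  shows "cyl0 \<mu> False = 1 - cyl0 \<mu> True"
proof -
  interpret prob_space \<mu> by fact
  have "{x \<in> space \<mu>. x 0} \<in> events"
    using cylinder_in_sets_S1[of 0 True] assms(2) sets_eq_imp_space_eq[OF assms(2)] by simp
  then show ?thesis
    using prob_neg[of "\<lambda>x. x 0"] sets_eq_imp_space_eq[OF assms(2)] by (simp add: cyl0_def)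
qed

lemma inv_measuresD:
  assumes "\<mu> \<in> inv_measures S T"
  shows "sets \<mu> = sets S" "prob_space \<mu>" "distr \<mu> \<mu> T = \<mu>"
  using assms by (auto simp: inv_measures_def)

lemma space_inv_measures:
  "\<mu> \<in> inv_measures S T \<Longrightarrow> space \<mu> = space S"
  by (rule sets_eq_imp_space_eq[OF inv_measuresD(1)])

lemma measurable_inv_measures:
  "\<mu> \<in> inv_measures S T \<Longrightarrow> f \<in> S \<rightarrow>\<^sub>M N \<Longrightarrow> f \<in> \<mu> \<rightarrow>\<^sub>M N"
  by (simp only: measurable_cong_sets[OF inv_measuresD(1) refl])

lemma measurable_inv_measures_self:
  "\<mu> \<in> inv_measures S T \<Longrightarrow> T \<in> S \<rightarrow>\<^sub>M S \<Longrightarrow> T \<in> \<mu> \<rightarrow>\<^sub>M \<mu>"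
  by (simp only: measurable_cong_sets[OF inv_measuresD(1) inv_measuresD(1)])

lemma inv_measures_distr:
  assumes \<mu>: "\<mu> \<in> inv_measures M T"
    and [measurable]: "f \<in> M \<rightarrow>\<^sub>M N" "T \<in> M \<rightarrow>\<^sub>M M" "T' \<in> N \<rightarrow>\<^sub>M N"
    and intertwine: "\<And>x. x \<in> space M \<Longrightarrow> T' (f x) = f (T x)"
  shows "distr \<mu> N f \<in> inv_measures N T'"
proof -
  note \<mu>_inv = inv_measuresD[OF \<mu>]
  have f_\<mu>: "f \<in> \<mu> \<rightarrow>\<^sub>M N"
    using \<mu> \<open>f \<in> M \<rightarrow>\<^sub>M N\<close> by (rule measurable_inv_measures)
  have T_\<mu>: "T \<in> \<mu> \<rightarrow>\<^sub>M \<mu>"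
    using \<mu> \<open>T \<in> M \<rightarrow>\<^sub>M M\<close> by (rule measurable_inv_measures_self)
  have "distr (distr \<mu> N f) (distr \<mu> N f) T' = distr (distr \<mu> N f) N T'"
    by (rule distr_cong) auto
  also have "\<dots> = distr \<mu> N (T' \<circ> f)"
    by (rule distr_distr) (simp_all add: f_\<mu>)
  also have "\<dots> = distr \<mu> N (f \<circ> T)"
    using space_inv_measures[OF \<mu>] by (intro distr_cong) (simp_all add: intertwine)
  also have "\<dots> = distr (distr \<mu> \<mu> T) N f"
    by (rule distr_distr[symmetric, OF f_\<mu> T_\<mu>])
  also have "\<dots> = distr \<mu> N f"
    by (simp only: \<mu>_inv(3))
  finally have "distr (distr \<mu> N f) (distr \<mu> N f) T' = distr \<mu> N f" .
  moreover have "prob_space (distr \<mu> N f)"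
    by (rule prob_space.prob_space_distr[OF \<mu>_inv(2) f_\<mu>])
  ultimately show ?thesis
    by (simp add: inv_measures_def)
qed

lemma MX_lift:
  assumes "pre_base X \<rho>" and "\<mu> \<in> MX X"
  obtains L where "L \<in> inv_measures S3 shift3" "distr L S2 pi12 = \<rho>" "\<mu> = distr L S1 Nmap"
  using assms by (auto simp: pre_base_def)

lemma MX_prob_space: "\<mu> \<in> MX X \<Longrightarrow> prob_space \<mu>" and sets_MX: "\<mu> \<in> MX X \<Longrightarrow> sets \<mu> = sets S1"
  by (auto simp: MX_def inv_measures_def)

lemma pre_base_selection_in_MX:
  assumes "pre_base X \<rho>"
  shows "distr \<rho> S1 (if b then snd else fst) \<in> MX X"
proof -
  have \<rho>: "\<rho> \<in> inv_measures S2 shift2"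
    and MX_eq: "MX X = {distr L S1 Nmap | L. L \<in> inv_measures S3 shift3 \<and> distr L S2 pi12 = \<rho>}"
    using assms by (auto simp: pre_base_def)
  \<comment> \<open>With the constant third sequence \<open>y \<equiv> b\<close>, \<open>N(w,x,y)\<close> selects \<open>x\<close> or \<open>w\<close>.\<close>
  define lift where "lift = (\<lambda>p::seq \<times> seq. (fst p, snd p, \<lambda>_::int. b))"
  have lift_S3[measurable]: "lift \<in> S2 \<rightarrow>\<^sub>M S3"
    unfolding lift_def by measurable
  have lift_\<rho>: "lift \<in> \<rho> \<rightarrow>\<^sub>M S3"
    using \<rho> lift_S3 by (rule measurable_inv_measures)
  have "distr \<rho> S3 lift \<in> inv_measures S3 shift3"
    by (rule inv_measures_distr[OF \<rho>]) (auto simp: lift_def shift3_def shift2_def shift_def)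
  moreover have "distr (distr \<rho> S3 lift) S2 pi12 = \<rho>"
  proof -
    have "distr (distr \<rho> S3 lift) S2 pi12 = distr \<rho> S2 (pi12 \<circ> lift)"
      by (rule distr_distr[OF pi12_measurable lift_\<rho>])
    also have "pi12 \<circ> lift = (\<lambda>p. p)"
      by (auto simp: lift_def pi12_def)
    finally show ?thesis
      using inv_measuresD(1)[OF \<rho>] by (simp add: distr_id2)
  qed
  moreover have "distr (distr \<rho> S3 lift) S1 Nmap = distr \<rho> S1 (if b then snd else fst)"
  proof -
    have "distr (distr \<rho> S3 lift) S1 Nmap = distr \<rho> S1 (Nmap \<circ> lift)"
      by (rule distr_distr[OF Nmap_measurable lift_\<rho>])
    also have "Nmap \<circ> lift = (if b then snd else fst)"
      by (auto simp: lift_def Nmap_def)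
    finally show ?thesis .
  qed
  ultimately show ?thesis
    unfolding MX_eq by (intro CollectI exI[of _ "distr \<rho> S3 lift"] conjI) auto
qed

lemma pre_base_marginals_in_MX:
  assumes "pre_base X \<rho>"
  shows "marg0 \<rho> \<in> MX X" "marg1 \<rho> \<in> MX X"
  using pre_base_selection_in_MX[OF assms, of False] pre_base_selection_in_MX[OF assms, of True]
  by (simp_all add: marg0_def marg1_def)

lemma base_lift_sandwich:
  assumes "base X \<rho>" and L: "L \<in> inv_measures S3 shift3" and L_\<rho>: "distr L S2 pi12 = \<rho>"
  shows "AE t in L. \<forall>n. fst t n \<le> Nmap t n \<and> Nmap t n \<le> fst (snd t) n"
proof -
  define G where "G = {(w::seq, x::seq). \<forall>n. w n \<le> x n}"
  have \<rho>: "\<rho> \<in> inv_measures S2 shift2" and G: "measure \<rho> G = 1"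
    using assms(1) by (auto simp: base_def pre_base_def G_def)
  have G_sets: "G \<in> sets S2"
    using G measure_notin_sets[of G \<rho>] inv_measuresD(1)[OF \<rho>] by auto
  have "AE p in \<rho>. p \<in> G"
    using G by (intro prob_space.AE_prob_1[OF inv_measuresD(2)[OF \<rho>]])
  then have "AE t in L. pi12 t \<in> G"
    unfolding L_\<rho>[symmetric]
    using G_sets by (subst (asm) AE_distr_iff[OF measurable_inv_measures[OF L pi12_measurable]]) auto
  then show ?thesis
    by eventually_elim (auto simp: G_def pi12_def Nmap_apply le_bool_def split: prod.splits)
qed

lemma marginals_eq_distr_lift:
  assumes L: "L \<in> inv_measures S3 shift3" and L_\<rho>: "distr L S2 pi12 = \<rho>"
  shows "marg0 \<rho> = distr L S1 fst" "marg1 \<rho> = distr L S1 (\<lambda>t. fst (snd t))"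
  unfolding marg0_def marg1_def L_\<rho>[symmetric]
  using measurable_inv_measures[OF L pi12_measurable]
  by (simp_all add: distr_distr pi12_eq comp_def)

lemma lift_cyl0_mono:
  assumes L: "L \<in> inv_measures S3 shift3"
    and f: "f \<in> S3 \<rightarrow>\<^sub>M S1" and g: "g \<in> S3 \<rightarrow>\<^sub>M S1"
    and f_shift3: "\<And>t. f (shift3 t) = shift (f t)" and g_shift3: "\<And>t. g (shift3 t) = shift (g t)"
    and le: "AE t in L. \<forall>n. f t n \<le> g t n"
  shows "cyl0 (distr L S1 f) True \<le> cyl0 (distr L S1 g) True"
    and "cyl0 (distr L S1 f) True = cyl0 (distr L S1 g) True \<Longrightarrow> distr L S1 f = distr L S1 g"
proof -
  interpret prob_space L
    by (rule inv_measuresD(2)[OF L])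
  have [measurable]: "f \<in> L \<rightarrow>\<^sub>M S1" "g \<in> L \<rightarrow>\<^sub>M S1"
    using f g by (simp_all add: measurable_inv_measures[OF L])
  have cyl0_eq: "cyl0 (distr L S1 h) True = \<P>(t in L. h t 0)" if "h \<in> L \<rightarrow>\<^sub>M S1" for h
    using cyl0_distr[OF that] by simp
  show "cyl0 (distr L S1 f) True \<le> cyl0 (distr L S1 g) True"
    using le by (simp add: cyl0_eq) (intro finite_measure_mono_AE; auto simp: le_bool_def)
  assume "cyl0 (distr L S1 f) True = cyl0 (distr L S1 g) True"
  then show "distr L S1 f = distr L S1 g"
    using inv_measuresD(3)[OF L] space_inv_measures[OF L]
    by (intro distr_eq_if_AE_le_and_prob_eq[OF measurable_inv_measures_self[OF L] _ _ _ _ _ le])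
      (auto simp: cyl0_eq f_shift3 g_shift3 measurable_inv_measures[OF L])
qed

definition unique_maximizer :: "seq set \<Rightarrow> bool \<Rightarrow> seq measure \<Rightarrow> bool" where
  "unique_maximizer X b \<nu> \<longleftrightarrow>
     \<nu> \<in> MX X \<and> (\<forall>\<mu>\<in>MX X. cyl0 \<mu> b \<le> cyl0 \<nu> b \<and> (cyl0 \<mu> b = cyl0 \<nu> b \<longrightarrow> \<mu> = \<nu>))"

lemma unique_maximizer_unique:
  "unique_maximizer X b \<nu> \<Longrightarrow> unique_maximizer X b \<nu>' \<Longrightarrow> \<nu>' = \<nu>"
  unfolding unique_maximizer_def by (meson order_antisym)

lemma unique_maximizer_SUP:
  "unique_maximizer X b \<nu> \<Longrightarrow> cyl0 \<nu> b = (SUP \<mu>\<in>MX X. cyl0 \<mu> b)"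
  unfolding unique_maximizer_def by (intro cSup_eq_maximum[symmetric]) auto

lemma base_unique_maximizer_marg1:
  assumes "base X \<rho>"
  shows "unique_maximizer X True (marg1 \<rho>)"
  unfolding unique_maximizer_def
proof (intro conjI ballI)
  have pre_base: "pre_base X \<rho>"
    using assms by (simp add: base_def)
  then show "marg1 \<rho> \<in> MX X"
    by (rule pre_base_marginals_in_MX)
  fix \<mu> assume "\<mu> \<in> MX X"
  with pre_base obtain L
    where L: "L \<in> inv_measures S3 shift3" "distr L S2 pi12 = \<rho>" and \<mu>: "\<mu> = distr L S1 Nmap"
    by (rule MX_lift)
  have "AE t in L. \<forall>n. Nmap t n \<le> fst (snd t) n"
    using base_lift_sandwich[OF assms L] by eventually_elim blast
  note compare = lift_cyl0_mono[OF L(1) Nmap_measurable _ Nmap_shift3 _ this]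
  show "cyl0 \<mu> True \<le> cyl0 (marg1 \<rho>) True"
    unfolding \<mu> marginals_eq_distr_lift[OF L]
    by (rule compare(1)) (auto simp: shift3_def split: prod.splits)
  show "cyl0 \<mu> True = cyl0 (marg1 \<rho>) True \<longrightarrow> \<mu> = marg1 \<rho>"
    unfolding \<mu> marginals_eq_distr_lift[OF L]
    by (intro impI compare(2)) (auto simp: shift3_def split: prod.splits)
qed

lemma base_unique_maximizer_marg0:
  assumes "base X \<rho>"
  shows "unique_maximizer X False (marg0 \<rho>)"
  unfolding unique_maximizer_def
proof (intro conjI ballI)
  have pre_base: "pre_base X \<rho>"
    using assms by (simp add: base_def)
  then show marg0: "marg0 \<rho> \<in> MX X"
    by (rule pre_base_marginals_in_MX)
  fix \<mu> assume \<mu>_MX: "\<mu> \<in> MX X"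
  with pre_base obtain L
    where L: "L \<in> inv_measures S3 shift3" "distr L S2 pi12 = \<rho>" and \<mu>: "\<mu> = distr L S1 Nmap"
    by (rule MX_lift)
  have cyl0_False_eq: "cyl0 \<nu> False = 1 - cyl0 \<nu> True" if "\<nu> \<in> MX X" for \<nu>
    using cyl0_False[OF MX_prob_space[OF that] sets_MX[OF that]] .
  have "AE t in L. \<forall>n. fst t n \<le> Nmap t n"
    using base_lift_sandwich[OF assms L] by eventually_elim blast
  note compare = lift_cyl0_mono[OF L(1) _ Nmap_measurable _ Nmap_shift3 this]
  have "cyl0 (marg0 \<rho>) True \<le> cyl0 \<mu> True"
    unfolding \<mu> marginals_eq_distr_lift[OF L]
    by (rule compare(1)) (auto simp: shift3_def split: prod.splits)
  then show "cyl0 \<mu> False \<le> cyl0 (marg0 \<rho>) False"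
    using cyl0_False_eq[OF \<mu>_MX] cyl0_False_eq[OF marg0] by simp
  show "cyl0 \<mu> False = cyl0 (marg0 \<rho>) False \<longrightarrow> \<mu> = marg0 \<rho>"
    using cyl0_False_eq[OF \<mu>_MX] cyl0_False_eq[OF marg0]
    unfolding \<mu> marginals_eq_distr_lift[OF L]
    by (auto intro!: compare(2)[symmetric] simp: shift3_def split: prod.splits)
qed

lemma uniform_measure_in_inv_measures:
  assumes \<nu>: "\<nu> \<in> inv_measures S T" and T: "T \<in> S \<rightarrow>\<^sub>M S"
    and A: "A \<in> sets S" and A_inv: "T -` A \<inter> space S = A" and pos: "emeasure \<nu> A \<noteq> 0"
  shows "uniform_measure \<nu> A \<in> inv_measures S T"
proof -
  note \<nu>_inv = inv_measuresD[OF \<nu>]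
  interpret prob_space \<nu> by (fact \<nu>_inv(2))
  have T_\<nu>: "T \<in> \<nu> \<rightarrow>\<^sub>M \<nu>"
    using \<nu> T by (rule measurable_inv_measures_self)
  have T_U: "T \<in> uniform_measure \<nu> A \<rightarrow>\<^sub>M uniform_measure \<nu> A"
    using T_\<nu> by (simp only: measurable_cong_sets[OF sets_uniform_measure sets_uniform_measure])
  have A_\<nu>: "A \<in> sets \<nu>"
    using A \<nu>_inv(1) by simp
  have space_\<nu>: "space \<nu> = space S"
    by (rule space_inv_measures[OF \<nu>])
  have "distr (uniform_measure \<nu> A) (uniform_measure \<nu> A) T = uniform_measure \<nu> A"
  proof (rule measure_eqI)
    fix B assume "B \<in> sets (distr (uniform_measure \<nu> A) (uniform_measure \<nu> A) T)"
    then have B: "B \<in> sets \<nu>" by simp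
    have TB: "T -` B \<inter> space \<nu> \<in> sets \<nu>"
      using measurable_sets[OF T_\<nu> B] .
    have "A \<inter> (T -` B \<inter> space \<nu>) = T -` (A \<inter> B) \<inter> space \<nu>"
      using A_inv space_\<nu> by auto
    then have "emeasure \<nu> (A \<inter> (T -` B \<inter> space \<nu>)) = emeasure (distr \<nu> \<nu> T) (A \<inter> B)"
      using A_\<nu> B by (simp add: emeasure_distr[OF T_\<nu>])
    then show "emeasure (distr (uniform_measure \<nu> A) (uniform_measure \<nu> A) T) B
        = emeasure (uniform_measure \<nu> A) B"
      using A_\<nu> B TB \<nu>_inv(3) by (simp add: emeasure_distr[OF T_U])
  qed simp
  moreover have "prob_space (uniform_measure \<nu> A)"
    using pos by (intro prob_space_uniform_measure) auto
  ultimately show ?thesis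
    using \<nu>_inv(1) by (simp add: inv_measures_def)
qed

lemma measure_uniform_measure_MX:
  assumes \<nu>: "\<nu> \<in> MX X" and A: "A \<in> sets S1" "measure \<nu> A \<noteq> 0" and B: "B \<in> sets S1"
  shows "measure (uniform_measure \<nu> A) B = measure \<nu> (A \<inter> B) / measure \<nu> A"
proof -
  interpret prob_space \<nu> by (rule MX_prob_space[OF \<nu>])
  show ?thesis
    using A B sets_MX[OF \<nu>] by (intro measure_uniform_measure) (auto simp: emeasure_eq_measure)
qed

lemma uniform_measure_in_MX:
  assumes \<nu>: "\<nu> \<in> MX X" and A: "A \<in> sets S1" "shift -` A = A" "measure \<nu> A \<noteq> 0"
  shows "uniform_measure \<nu> A \<in> MX X"
proof -
  interpret prob_space \<nu> by (rule MX_prob_space[OF \<nu>])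
  have \<nu>_inv: "\<nu> \<in> inv_measures S1 shift" and X: "measure \<nu> X = 1"
    using \<nu> by (auto simp: MX_def)
  have "uniform_measure \<nu> A \<in> inv_measures S1 shift"
    using A by (intro uniform_measure_in_inv_measures[OF \<nu>_inv shift_measurable])
      (auto simp: emeasure_eq_measure)
  moreover have "measure (uniform_measure \<nu> A) X = 1"
  proof -
    have X_sets: "X \<in> sets S1"
      using X measure_notin_sets[of X \<nu>] sets_MX[OF \<nu>] by auto
    have "AE x in \<nu>. x \<in> X"
      using X by (intro AE_prob_1)
    then have "measure \<nu> (A \<inter> X) = measure \<nu> A"
      using A X_sets sets_MX[OF \<nu>] by (intro measure_eq_AE) auto
    then show ?thesis
      using measure_uniform_measure_MX[OF \<nu> A(1,3) X_sets] A(3) by simp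
  qed
  ultimately show ?thesis
    by (simp add: MX_def)
qed

lemma ergodic_if_unique_maximizer:
  assumes max: "unique_maximizer X b \<nu>"
  shows "ergodic \<nu>"
  unfolding ergodic_def
proof (intro conjI ballI impI)
  have \<nu>: "\<nu> \<in> MX X"
    using max by (simp add: unique_maximizer_def)
  then show "\<nu> \<in> inv_measures S1 shift"
    by (simp add: MX_def)
  interpret prob_space \<nu> by (rule MX_prob_space[OF \<nu>])
  have space_\<nu>: "space \<nu> = UNIV"
    using sets_eq_imp_space_eq[OF sets_MX[OF \<nu>]] by simp
  fix A assume A: "A \<in> sets S1" and "shift -` A \<inter> space S1 = A"
  then have A_inv: "shift -` A = A" by simp
  show "measure \<nu> A = 0 \<or> measure \<nu> A = 1"
  proof (rule ccontr)
    assume "\<not> (measure \<nu> A = 0 \<or> measure \<nu> A = 1)"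
    then have p: "0 < measure \<nu> A" "measure \<nu> A < 1"
      using measure_nonneg[of \<nu> A] prob_le_1[of A] by linarith+
    have A': "- A \<in> sets S1" "shift -` (- A) = - A" "measure \<nu> (- A) = 1 - measure \<nu> A"
      using A A_inv sets.compl_sets[OF A] prob_compl[of A] sets_MX[OF \<nu>] space_\<nu>
      by (auto simp: Compl_eq_Diff_UNIV)
    define C where "C = {x::seq. x 0 = b}"
    have C: "C \<in> sets S1"
      by (simp add: C_def)
    have cyl0_uniform: "cyl0 (uniform_measure \<nu> B) b = measure \<nu> (B \<inter> C) / measure \<nu> B"
      if "B \<in> sets S1" "measure \<nu> B \<noteq> 0" for B
      using measure_uniform_measure_MX[OF \<nu> that C] by (simp add: cyl0_def C_def)
    have bound: "measure \<nu> (B \<inter> C) / measure \<nu> B \<le> measure \<nu> C"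
      if "B \<in> sets S1" "shift -` B = B" "measure \<nu> B \<noteq> 0" for B
      using max uniform_measure_in_MX[OF \<nu> that] cyl0_uniform[OF that(1,3)]
      by (auto simp: unique_maximizer_def cyl0_def C_def)
    have "measure \<nu> C = measure \<nu> (A \<inter> C) + measure \<nu> (- A \<inter> C)"
      using A C sets_MX[OF \<nu>]
      by (subst finite_measure_Union[symmetric]) (auto intro!: arg_cong[where f="measure \<nu>"])
    moreover have "measure \<nu> (A \<inter> C) \<le> measure \<nu> A * measure \<nu> C"
      using bound[OF A A_inv] p by (simp add: pos_divide_le_eq mult.commute)
    moreover have "measure \<nu> (- A \<inter> C) \<le> (1 - measure \<nu> A) * measure \<nu> C"
      using bound[OF A'(1,2)] A'(3) p by (simp add: pos_divide_le_eq mult.commute)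
    ultimately have "measure \<nu> (A \<inter> C) / measure \<nu> A = measure \<nu> C"
      using p by (simp add: field_simps)
    then have "uniform_measure \<nu> A = \<nu>"
      using max uniform_measure_in_MX[OF \<nu> A A_inv] cyl0_uniform[OF A] p
      by (auto simp: unique_maximizer_def cyl0_def C_def)
    moreover have "measure (uniform_measure \<nu> A) A = 1"
      using measure_uniform_measure_MX[OF \<nu> A _ A] p by simp
    ultimately show False
      using p by simp
  qed
qed

theorem corollary4p6:
  fixes X :: "seq set" and \<rho> :: "(seq \<times> seq) measure"
  assumes "sandwich_subshift X" and "base X \<rho>"
  shows "ergodic (marg0 \<rho>) \<and> ergodic (marg1 \<rho>)
    \<and> (\<forall>\<rho>'. base X \<rho>' \<longrightarrow> marg0 \<rho>' = marg0 \<rho> \<and> marg1 \<rho>' = marg1 \<rho>)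
    \<and> cyl0 (marg1 \<rho>) True = (SUP \<mu>\<in>MX X. cyl0 \<mu> True)
    \<and> cyl0 (marg0 \<rho>) False = (SUP \<mu>\<in>MX X. cyl0 \<mu> False)
    \<and> marg1 \<rho> \<in> MX X \<and> (\<forall>\<mu>\<in>MX X. cyl0 \<mu> True = cyl0 (marg1 \<rho>) True \<longrightarrow> \<mu> = marg1 \<rho>)
    \<and> marg0 \<rho> \<in> MX X \<and> (\<forall>\<mu>\<in>MX X. cyl0 \<mu> False = cyl0 (marg0 \<rho>) False \<longrightarrow> \<mu> = marg0 \<rho>)"
proof -
  have max1: "unique_maximizer X True (marg1 \<rho>)"
    using assms(2) by (rule base_unique_maximizer_marg1)
  have max0: "unique_maximizer X False (marg0 \<rho>)"
    using assms(2) by (rule base_unique_maximizer_marg0)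
  have "marg0 \<rho>' = marg0 \<rho> \<and> marg1 \<rho>' = marg1 \<rho>" if "base X \<rho>'" for \<rho>'
    using unique_maximizer_unique[OF max0 base_unique_maximizer_marg0[OF that]]
      unique_maximizer_unique[OF max1 base_unique_maximizer_marg1[OF that]] by simp
  then show ?thesis
    using ergodic_if_unique_maximizer[OF max0] ergodic_if_unique_maximizer[OF max1]
      unique_maximizer_SUP[OF max1] unique_maximizer_SUP[OF max0] max0 max1
    by (auto simp: unique_maximizer_def)
qed

end
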